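(* Let $X$ be a locally finite poset with a unique minimal element $0$ and let $g:X\to L^+$ be isotone. Then the set of functions $f:X\to L^+$ satisfying $g(x)=\bigvee_{y\le x}f(y)$ for all $x\in X$ is exactly the interval $[m_*,m^*]=\{f: m_*(x)\le f(x)\le m^*(x)\ \forall x\in X\}$, where $m^*(x)=g(x)$ for all $x$, and $m_*(x)=g(x)$ if $g(x)>g(y)$ for all $y\prec x$, $m_*(x)=\mathbb{O}$ otherwise.
   Context: $(L^+,\le)$ is a totally ordered set with bottom $\mathbb{O}$ and top $\mathbb{1}$. $X$ locally finite means every interval $[u,v]=\{x:u\le x\le v\}$ is finite. $y\prec x$ means $x$ covers $y$ ($y<x$ and no element strictly between). Isotone means order preserving. *)

theory Defs
  imports Main
begin

definition covered_by :: "'a::order \<Rightarrow> 'a \<Rightarrow> bool" where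
  "covered_by y x \<longleftrightarrow> y < x \<and> \<not> (\<exists>z. y < z \<and> z < x)"

definition locally_finite_order :: "'a::order itself \<Rightarrow> bool" where
  "locally_finite_order _ \<longleftrightarrow> (\<forall>u v::'a. finite {x. u \<le> x \<and> x \<le> v})"

definition is_join :: "'b::order set \<Rightarrow> 'b \<Rightarrow> bool" where
  "is_join S a \<longleftrightarrow> (\<forall>s\<in>S. s \<le> a) \<and> (\<forall>b. (\<forall>s\<in>S. s \<le> b) \<longrightarrow> a \<le> b)"

definition m_upper :: "('a \<Rightarrow> 'b) \<Rightarrow> 'a \<Rightarrow> 'b" where
  "m_upper g x = g x"

definition m_lower :: "('a::order \<Rightarrow> 'b::{linorder,order_bot}) \<Rightarrow> 'a \<Rightarrow> 'b" where
  "m_lower g x = (if (\<forall>y. covered_by y x \<longrightarrow> g y < g x) then g x else bot)"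

end

theory Submission
  imports Defs
begin

text \<open>Since \<open>L\<^sup>+\<close> is a chain and every down-set \<open>{..x}\<close> is finite, the join over \<open>y \<le> x\<close> is attained:
  \<open>f\<close> is a solution iff \<open>f \<le> g\<close> pointwise and every \<open>g x\<close> equals \<open>f z\<close> for some \<open>z \<le> x\<close>.
  If \<open>g\<close> strictly increases across every cover below \<open>x\<close>, such a \<open>z\<close> must be \<open>x\<close> itself, forcing
  \<open>f x = g x\<close>; otherwise \<open>g x = g y\<close> for a cover \<open>y \<prec> x\<close> and the value can be attained
  below \<open>y\<close>, by induction on the size of the down-set.\<close>

lemma finite_atMost_if_bottom:
  assumes "locally_finite_order TYPE('a::order)" and "\<forall>x. (zero::'a) \<le> x"
  shows "finite {..x::'a}"
proof -
  have "finite {y. zero \<le> y \<and> y \<le> x}"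
    using assms(1) unfolding locally_finite_order_def by blast
  moreover have "{y. zero \<le> y \<and> y \<le> x} = {..x}"
    using assms(2) by auto
  ultimately show ?thesis by simp
qed

lemma covered_by_exists_above:
  assumes "finite {..x::'a::order}" and "y < x"
  obtains z where "y \<le> z" and "covered_by z x"
proof -
  have "finite {z. z < x}" by (rule finite_subset[OF _ assms(1)]) auto
  moreover have "y \<in> {z. z < x}" using assms(2) by simp
  ultimately obtain m where m: "m \<in> {z. z < x}" "y \<le> m"
    and max: "\<forall>b\<in>{z. z < x}. m \<le> b \<longrightarrow> m = b"
    by (blast dest: finite_has_maximal2)
  have "covered_by m x"
    unfolding covered_by_def
  proof (intro conjI notI)
    show "m < x" using m by simp
  next
    assume "\<exists>z. m < z \<and> z < x"
    then obtain z where "m < z" and "z < x" by blast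
    then have "m = z" using max[rule_format, of z] by (simp add: less_imp_le)
    with \<open>m < z\<close> show False by simp
  qed
  with \<open>y \<le> m\<close> show ?thesis by (rule that)
qed

lemma is_join_finite_iff:
  fixes S :: "'b::linorder set"
  assumes "finite S" and "S \<noteq> {}"
  shows "is_join S a \<longleftrightarrow> a \<in> S \<and> (\<forall>s\<in>S. s \<le> a)"
proof
  assume join: "is_join S a"
  have "a \<le> Max S" using join assms unfolding is_join_def by simp
  moreover have "Max S \<le> a" using join assms unfolding is_join_def by simp
  ultimately have "a = Max S" by simp
  with join assms show "a \<in> S \<and> (\<forall>s\<in>S. s \<le> a)" unfolding is_join_def by simp
qed (auto simp: is_join_def)

lemma is_join_downsets_iff:
  fixes f g :: "'a::order \<Rightarrow> 'b::linorder"
  assumes "mono g" and fin: "\<And>x::'a. finite {..x}"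
  shows "(\<forall>x. is_join {f y | y. y \<le> x} (g x)) \<longleftrightarrow>
           (\<forall>x. f x \<le> g x) \<and> (\<forall>x. \<exists>z\<le>x. f z = g x)"
proof -
  have image: "{f y | y. y \<le> x} = f ` {..x}" for x by auto
  have join_iff: "is_join {f y | y. y \<le> x} (g x) \<longleftrightarrow>
      (\<exists>z\<le>x. f z = g x) \<and> (\<forall>y\<le>x. f y \<le> g x)" for x
  proof -
    have "finite {f y | y. y \<le> x}" unfolding image using fin by simp
    then have "is_join {f y | y. y \<le> x} (g x) \<longleftrightarrow>
        g x \<in> {f y | y. y \<le> x} \<and> (\<forall>s\<in>{f y | y. y \<le> x}. s \<le> g x)"
      by (intro is_join_finite_iff) auto
    then show ?thesis by auto
  qed
  have bounded_iff: "(\<forall>x. \<forall>y\<le>x. f y \<le> g x) \<longleftrightarrow> (\<forall>x. f x \<le> g x)"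
  proof (intro iffI allI impI)
    fix x y :: 'a
    assume "\<forall>x. f x \<le> g x" and "y \<le> x"
    then have "f y \<le> g y" by simp
    also have "\<dots> \<le> g x" using \<open>mono g\<close> \<open>y \<le> x\<close> by (rule monoD)
    finally show "f y \<le> g x" .
  qed simp
  have "(\<forall>x. is_join {f y | y. y \<le> x} (g x)) \<longleftrightarrow>
      (\<forall>x. \<exists>z\<le>x. f z = g x) \<and> (\<forall>x. \<forall>y\<le>x. f y \<le> g x)"
    by (simp only: join_iff all_conj_distrib)
  also have "\<dots> \<longleftrightarrow> (\<forall>x. f x \<le> g x) \<and> (\<forall>x. \<exists>z\<le>x. f z = g x)"
    by (simp only: bounded_iff conj_commute)
  finally show ?thesis .
qed

lemma m_lower_le_if_attained:
  fixes f g :: "'a::order \<Rightarrow> 'b::{linorder,order_bot}"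
  assumes "mono g" and "finite {..x}"
    and below: "\<And>y. f y \<le> g y" and attained: "\<exists>z\<le>x. f z = g x"
  shows "m_lower g x \<le> f x"
proof (cases "\<forall>y. covered_by y x \<longrightarrow> g y < g x")
  case strict: True
  obtain z where "z \<le> x" and fz: "f z = g x" using attained by blast
  have "z = x"
  proof (rule ccontr)
    assume "z \<noteq> x"
    with \<open>z \<le> x\<close> have "z < x" by simp
    then obtain w where "z \<le> w" and "covered_by w x"
      using covered_by_exists_above[OF \<open>finite {..x}\<close>] by blast
    have "g x = f z" using fz by simp
    also have "\<dots> \<le> g z" by (rule below)
    also have "\<dots> \<le> g w" using \<open>mono g\<close> \<open>z \<le> w\<close> by (rule monoD)
    also have "\<dots> < g x" using strict \<open>covered_by w x\<close> by blast
    finally show False by simp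
  qed
  with fz strict show ?thesis by (simp add: m_lower_def)
qed (auto simp: m_lower_def)

lemma attained_if_m_lower_le:
  fixes f g :: "'a::order \<Rightarrow> 'b::{linorder,order_bot}"
  assumes "mono g" and fin: "\<And>x::'a. finite {..x}"
    and bounds: "\<And>y. m_lower g y \<le> f y \<and> f y \<le> g y"
  shows "\<exists>z\<le>x. f z = g x"
proof (induction "card {..x}" arbitrary: x rule: less_induct)
  case less
  show ?case
  proof (cases "\<forall>y. covered_by y x \<longrightarrow> g y < g x")
    case True
    then have "m_lower g x = g x" by (simp add: m_lower_def)
    with bounds[of x] show ?thesis by auto
  next
    case False
    then obtain y where "covered_by y x" and "\<not> g y < g x" by blast
    then have "y < x" by (simp add: covered_by_def)
    then have "g y \<le> g x" by (rule monoD[OF \<open>mono g\<close> less_imp_le])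
    with \<open>\<not> g y < g x\<close> have gy: "g y = g x" by simp
    have "{..y} \<subset> {..x}" using \<open>y < x\<close> by (simp add: less_le_not_le)
    then have "card {..y} < card {..x}" by (rule psubset_card_mono[OF fin])
    then obtain z where "z \<le> y" and "f z = g y" using less by blast
    moreover from \<open>z \<le> y\<close> \<open>y < x\<close> have "z \<le> x" by (rule order.trans[OF _ less_imp_le])
    ultimately show ?thesis using gy by auto
  qed
qed

lemma attained_iff_m_lower_le:
  fixes f g :: "'a::order \<Rightarrow> 'b::{linorder,order_bot}"
  assumes "mono g" and fin: "\<And>x::'a. finite {..x}" and below: "\<And>y. f y \<le> g y"
  shows "(\<forall>x. \<exists>z\<le>x. f z = g x) \<longleftrightarrow> (\<forall>x. m_lower g x \<le> f x)"
proof (intro iffI allI)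
  fix x
  assume "\<forall>x. \<exists>z\<le>x. f z = g x"
  then show "m_lower g x \<le> f x"
    by (intro m_lower_le_if_attained[OF \<open>mono g\<close> fin below]) simp
next
  fix x
  assume "\<forall>x. m_lower g x \<le> f x"
  then show "\<exists>z\<le>x. f z = g x"
    using below by (intro attained_if_m_lower_le[OF \<open>mono g\<close> fin]) simp
qed

theorem theorem2:
  fixes g :: "'a::order \<Rightarrow> 'l::{linorder,order_bot,order_top}"
    and zero :: 'a
  assumes "locally_finite_order TYPE('a)"
    and "\<forall>x. zero \<le> x"
    and "mono g"
  shows "{f :: 'a \<Rightarrow> 'l. \<forall>x. is_join {f y | y. y \<le> x} (g x)}
       = {f. \<forall>x. m_lower g x \<le> f x \<and> f x \<le> m_upper g x}"
proof (intro set_eqI)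
  have fin: "\<And>x. finite {..x::'a}" using finite_atMost_if_bottom[OF assms(1,2)] .
  fix f :: "'a \<Rightarrow> 'l"
  have "(\<forall>x. is_join {f y | y. y \<le> x} (g x)) \<longleftrightarrow>
          (\<forall>x. f x \<le> g x) \<and> (\<forall>x. \<exists>z\<le>x. f z = g x)"
    using is_join_downsets_iff[OF \<open>mono g\<close> fin] .
  also have "\<dots> \<longleftrightarrow> (\<forall>x. f x \<le> g x) \<and> (\<forall>x. m_lower g x \<le> f x)"
  proof (cases "\<forall>x. f x \<le> g x")
    case True
    then show ?thesis using attained_iff_m_lower_le[OF \<open>mono g\<close> fin, of f] by simp
  qed blast
  finally show "f \<in> {f. \<forall>x. is_join {f y | y. y \<le> x} (g x)} \<longleftrightarrow>
      f \<in> {f. \<forall>x. m_lower g x \<le> f x \<and> f x \<le> m_upper g x}"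
    by (auto simp: m_upper_def)
qed

end
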